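(* Let $G$ be a group with a finite generating set $S$ such that the word length $l=|\cdot|_S:G\to\mathbb{Z}$ is a $\delta$-hyperbolic length function for some $\delta\in\mathbb{Z}$, $\delta\geqslant0$. Let $H=G\times G$ and define $l_H:H\to\mathbb{Z}^2$ by $l_H(f,g)=(l(f),l(g))$, where $\mathbb{Z}^2$ carries the right lexicographic order. Then for every integer $\delta_1>\delta$, $l_H$ is a $\delta_H$-hyperbolic length function on $H$, where $\delta_H=(\delta_1,\delta_1)$.
   Context: The right lexicographic order on $\mathbb{Z}^2$: $(a,b)\leqslant(c,d)$ iff $b<d$, or $b=d$ and $a\leqslant c$. For an ordered abelian group $\Lambda$ (with ordered divisible hull $\Lambda_{\mathbb{Q}}\supseteq\Lambda$), a length function on a group $K$ is $l:K\to\Lambda$ with $l(k)\geqslant0$, $l(1)=0$, $l(k)=l(k^{-1})$, $l(kk')\leqslant l(k)+l(k')$. With $c(g,h)=\tfrac12(l(g)+l(h)-l(g^{-1}h))\in\Lambda_{\mathbb{Q}}$, $l$ is $\delta$-hyperbolic ($\delta\in\Lambda$) if $c(f,g)\geqslant\min\{c(f,h),c(g,h)\}-\delta$ for all $f,g,h\in K$. The word length $|g|_S$ is the minimal length of a word in $S^{\pm1}$ representing $g$. *)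

theory Defs
  imports Complex_Main "HOL-Algebra.Generated_Groups"
begin

definition word_length :: "('a, 'b) monoid_scheme \<Rightarrow> 'a set \<Rightarrow> 'a \<Rightarrow> nat" where
  "word_length G S g = (LEAST n. \<exists>ws. length ws = n \<and>
      set ws \<subseteq> S \<union> (\<lambda>s. inv\<^bsub>G\<^esub> s) ` S \<and> foldr (\<otimes>\<^bsub>G\<^esub>) ws \<one>\<^bsub>G\<^esub> = g)"

definition is_length_function_int :: "('a, 'b) monoid_scheme \<Rightarrow> ('a \<Rightarrow> int) \<Rightarrow> bool" where
  "is_length_function_int G l \<longleftrightarrow>
     (\<forall>k\<in>carrier G. l k \<ge> 0) \<and> l \<one>\<^bsub>G\<^esub> = 0 \<and>
     (\<forall>k\<in>carrier G. l k = l (inv\<^bsub>G\<^esub> k)) \<and>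
     (\<forall>k\<in>carrier G. \<forall>k'\<in>carrier G. l (k \<otimes>\<^bsub>G\<^esub> k') \<le> l k + l k')"

definition gromov_int :: "('a, 'b) monoid_scheme \<Rightarrow> ('a \<Rightarrow> int) \<Rightarrow> 'a \<Rightarrow> 'a \<Rightarrow> rat" where
  "gromov_int G l g h = (of_int (l g) + of_int (l h) - of_int (l (inv\<^bsub>G\<^esub> g \<otimes>\<^bsub>G\<^esub> h))) / 2"

definition hyperbolic_length_int :: "('a, 'b) monoid_scheme \<Rightarrow> ('a \<Rightarrow> int) \<Rightarrow> int \<Rightarrow> bool" where
  "hyperbolic_length_int G l \<delta> \<longleftrightarrow> is_length_function_int G l \<and>
     (\<forall>f\<in>carrier G. \<forall>g\<in>carrier G. \<forall>h\<in>carrier G.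
        gromov_int G l f g \<ge> min (gromov_int G l f h) (gromov_int G l g h) - of_int \<delta>)"

definition rlex_le :: "'a::linorder \<times> 'a \<Rightarrow> 'a \<times> 'a \<Rightarrow> bool" where
  "rlex_le x y \<longleftrightarrow> snd x < snd y \<or> (snd x = snd y \<and> fst x \<le> fst y)"

definition rlex_min :: "'a::linorder \<times> 'a \<Rightarrow> 'a \<times> 'a \<Rightarrow> 'a \<times> 'a" where
  "rlex_min x y = (if rlex_le x y then x else y)"

definition pair_add :: "'a::plus \<times> 'a \<Rightarrow> 'a \<times> 'a \<Rightarrow> 'a \<times> 'a" where
  "pair_add x y = (fst x + fst y, snd x + snd y)"

definition pair_sub :: "'a::minus \<times> 'a \<Rightarrow> 'a \<times> 'a \<Rightarrow> 'a \<times> 'a" where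
  "pair_sub x y = (fst x - fst y, snd x - snd y)"

definition is_length_function_Z2 :: "('a, 'b) monoid_scheme \<Rightarrow> ('a \<Rightarrow> int \<times> int) \<Rightarrow> bool" where
  "is_length_function_Z2 G l \<longleftrightarrow>
     (\<forall>k\<in>carrier G. rlex_le (0, 0) (l k)) \<and> l \<one>\<^bsub>G\<^esub> = (0, 0) \<and>
     (\<forall>k\<in>carrier G. l k = l (inv\<^bsub>G\<^esub> k)) \<and>
     (\<forall>k\<in>carrier G. \<forall>k'\<in>carrier G. rlex_le (l (k \<otimes>\<^bsub>G\<^esub> k')) (pair_add (l k) (l k')))"

definition gromov_Z2 :: "('a, 'b) monoid_scheme \<Rightarrow> ('a \<Rightarrow> int \<times> int) \<Rightarrow> 'a \<Rightarrow> 'a \<Rightarrow> rat \<times> rat" where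
  "gromov_Z2 G l g h =
     (let a = l g; b = l h; c = l (inv\<^bsub>G\<^esub> g \<otimes>\<^bsub>G\<^esub> h) in
       ((of_int (fst a) + of_int (fst b) - of_int (fst c)) / 2,
        (of_int (snd a) + of_int (snd b) - of_int (snd c)) / 2))"

definition hyperbolic_length_Z2 :: "('a, 'b) monoid_scheme \<Rightarrow> ('a \<Rightarrow> int \<times> int) \<Rightarrow> int \<times> int \<Rightarrow> bool" where
  "hyperbolic_length_Z2 G l \<delta> \<longleftrightarrow> is_length_function_Z2 G l \<and>
     (\<forall>f\<in>carrier G. \<forall>g\<in>carrier G. \<forall>h\<in>carrier G.
        rlex_le (pair_sub (rlex_min (gromov_Z2 G l f h) (gromov_Z2 G l g h))
                          (of_int (fst \<delta>), of_int (snd \<delta>)))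
                (gromov_Z2 G l f g))"

end

theory Submission
  imports Defs
begin

text \<open>In the right lexicographic order the second coordinate decides unless it ties, and
  the second coordinate of the Gromov product on \<open>G \<times> H\<close> is the Gromov product of \<open>H\<close>.
  Hyperbolicity of \<open>H\<close> with constant \<open>\<delta> < \<delta>\<^sub>2\<close> therefore makes the comparison
  strict in the second coordinate, whatever the first coordinates and \<open>\<delta>\<^sub>1\<close> are.\<close>

lemma snd_rlex_min: "snd (rlex_min x y) = min (snd x) (snd y)"
  unfolding rlex_min_def rlex_le_def by auto

lemma rlex_le_if_snd_less: "snd x < snd y \<Longrightarrow> rlex_le x y"
  unfolding rlex_le_def by simp

lemma inv_DirProd_eq:
  assumes "group G" "group H" "p \<in> carrier (G \<times>\<times> H)"
  shows "inv\<^bsub>G \<times>\<times> H\<^esub> p = (inv\<^bsub>G\<^esub> fst p, inv\<^bsub>H\<^esub> snd p)"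
  using assms by (cases p) simp

lemma length_function_Z2_DirProd:
  assumes "group G" "group H"
    and l1: "is_length_function_int G l1" and l2: "is_length_function_int H l2"
  shows "is_length_function_Z2 (G \<times>\<times> H) (\<lambda>p. (l1 (fst p), l2 (snd p)))"
  unfolding is_length_function_Z2_def
proof (intro conjI ballI)
  fix k assume "k \<in> carrier (G \<times>\<times> H)"
  then show "rlex_le (0, 0) (l1 (fst k), l2 (snd k))"
    using l1 l2 unfolding is_length_function_int_def rlex_le_def by (auto simp: mem_Times_iff)
next
  show "(l1 (fst \<one>\<^bsub>G \<times>\<times> H\<^esub>), l2 (snd \<one>\<^bsub>G \<times>\<times> H\<^esub>)) = (0, 0)"
    using l1 l2 unfolding is_length_function_int_def by simp
next
  fix k assume k: "k \<in> carrier (G \<times>\<times> H)"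
  then show "(l1 (fst k), l2 (snd k))
      = (l1 (fst (inv\<^bsub>G \<times>\<times> H\<^esub> k)), l2 (snd (inv\<^bsub>G \<times>\<times> H\<^esub> k)))"
    using l1 l2 inv_DirProd_eq[OF assms(1,2) k]
    unfolding is_length_function_int_def by (auto simp: mem_Times_iff)
next
  fix k k' assume "k \<in> carrier (G \<times>\<times> H)" "k' \<in> carrier (G \<times>\<times> H)"
  then have "l1 (fst k \<otimes>\<^bsub>G\<^esub> fst k') \<le> l1 (fst k) + l1 (fst k')"
    and "l2 (snd k \<otimes>\<^bsub>H\<^esub> snd k') \<le> l2 (snd k) + l2 (snd k')"
    using l1 l2 unfolding is_length_function_int_def by (auto simp: mem_Times_iff)
  then show "rlex_le (l1 (fst (k \<otimes>\<^bsub>G \<times>\<times> H\<^esub> k')), l2 (snd (k \<otimes>\<^bsub>G \<times>\<times> H\<^esub> k')))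
      (pair_add (l1 (fst k), l2 (snd k)) (l1 (fst k'), l2 (snd k')))"
    unfolding rlex_le_def pair_add_def mult_DirProd' by auto
qed

lemma snd_gromov_Z2_DirProd:
  assumes "group G" "group H" "p \<in> carrier (G \<times>\<times> H)"
  shows "snd (gromov_Z2 (G \<times>\<times> H) (\<lambda>p. (l1 (fst p), l2 (snd p))) p q)
       = gromov_int H l2 (snd p) (snd q)"
  unfolding gromov_Z2_def gromov_int_def Let_def
  using inv_DirProd_eq[OF assms] by (simp add: mult_DirProd')

lemma hyperbolic_length_Z2_DirProd:
  assumes "group G" "group H"
    and l1: "is_length_function_int G l1"
    and l2: "hyperbolic_length_int H l2 \<delta>"
    and "\<delta> < \<delta>\<^sub>2"
  shows "hyperbolic_length_Z2 (G \<times>\<times> H) (\<lambda>p. (l1 (fst p), l2 (snd p))) (\<delta>\<^sub>1, \<delta>\<^sub>2)"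
  unfolding hyperbolic_length_Z2_def fst_conv snd_conv
proof (intro conjI ballI)
  show "is_length_function_Z2 (G \<times>\<times> H) (\<lambda>p. (l1 (fst p), l2 (snd p)))"
    using length_function_Z2_DirProd assms(1,2) l1 l2
    unfolding hyperbolic_length_int_def by blast
next
  let ?L = "\<lambda>p. (l1 (fst p), l2 (snd p))"
  let ?c = "gromov_int H l2"
  fix f g h assume f: "f \<in> carrier (G \<times>\<times> H)" and g: "g \<in> carrier (G \<times>\<times> H)"
    and h: "h \<in> carrier (G \<times>\<times> H)"
  have "min (?c (snd f) (snd h)) (?c (snd g) (snd h)) - of_int \<delta> \<le> ?c (snd f) (snd g)"
    using l2 f g h unfolding hyperbolic_length_int_def by (auto simp: mem_Times_iff)
  then have "min (?c (snd f) (snd h)) (?c (snd g) (snd h)) - of_int \<delta>\<^sub>2 < ?c (snd f) (snd g)"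
    using \<open>\<delta> < \<delta>\<^sub>2\<close> by linarith
  then show "rlex_le (pair_sub (rlex_min (gromov_Z2 (G \<times>\<times> H) ?L f h)
      (gromov_Z2 (G \<times>\<times> H) ?L g h)) (of_int \<delta>\<^sub>1, of_int \<delta>\<^sub>2)) (gromov_Z2 (G \<times>\<times> H) ?L f g)"
    by (intro rlex_le_if_snd_less) (simp add: pair_sub_def snd_rlex_min
        snd_gromov_Z2_DirProd[OF assms(1,2) f] snd_gromov_Z2_DirProd[OF assms(1,2) g])
qed

theorem mainTheorem12:
  fixes G :: "('a, 'b) monoid_scheme" and S :: "'a set" and \<delta> \<delta>\<^sub>1 :: int
  assumes "group G"
    and "finite S" and "S \<subseteq> carrier G" and "generate G S = carrier G"
    and "\<delta> \<ge> 0"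
    and "hyperbolic_length_int G (\<lambda>g. int (word_length G S g)) \<delta>"
    and "\<delta>\<^sub>1 > \<delta>"
  shows "hyperbolic_length_Z2 (G \<times>\<times> G)
           (\<lambda>p. (int (word_length G S (fst p)), int (word_length G S (snd p)))) (\<delta>\<^sub>1, \<delta>\<^sub>1)"
  using hyperbolic_length_Z2_DirProd[OF assms(1,1) _ assms(6,7)] assms(6)
  unfolding hyperbolic_length_int_def by blast

end
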